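(* Assume (A7). Then for the iterates of D-MSSCA, for all $T>1$ and $\alpha\in(0,1)$, $$\sum_{t=1}^T\mathbb{E}[(\theta^t)^2]\le\frac{4\alpha^2\lambda_W^2}{(1-\lambda_W^2)^2}\sum_{t=1}^{T-1}\mathbb{E}\|\delta^t\|^2 .$$
   Context: Problem. Let $n,d\ge 1$. For $i\in\{1,\dots,n\}$ and each value of a random variable $\xi$, $f_i(\cdot,\xi):\mathbb{R}^d\to\mathbb{R}$ is differentiable (possibly non-convex); $u_i(x):=\mathbb{E}[f_i(x,\xi_i)]$ and $u(x):=\frac1n\sum_{i=1}^n u_i(x)$. The function $h:\mathbb{R}^d\to\mathbb{R}$ is convex (possibly non-smooth), $g:\mathbb{R}^d\to\mathbb{R}$ is convex, $\mathcal{X}:=\{x\in\mathbb{R}^d: g(x)\le 0\}$, and $\mathbb{1}_{\mathcal X}$ is its indicator function ($0$ on $\mathcal X$, $+\infty$ outside). Let $U:=u+h$ and $U^\star:=\min_{x\in\mathcal X}U(x)$. The $n$ agents communicate over a graph with vertex set $\{1,\dots,n\}$ and edge set $\mathcal E$ through a matrix $W\in\mathbb{R}^{n\times n}$; $\lambda_W:=\lambda_{\max}(W-\frac1n\mathbf 1_n\mathbf 1_n^\top)$. Algorithm D-MSSCA. Parameters: $\alpha,\beta\in(0,1)$, $\mu>0$, an initial batch size $b_0\in\mathbb N$. For each $i$, each $x'\in\mathbb{R}^d$ and each sample $\xi$, a surrogate $\hat f_i(\cdot,x',\xi):\mathbb{R}^d\to\mathbb{R}$ is used that is $\mu$-strongly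 convex and satisfies $\nabla_x\hat f_i(x',x',\xi)=\nabla f_i(x',\xi)$. Node $i$ draws samples $\xi_i^{1,1},\dots,\xi_i^{1,b_0}$ (with $\xi_i^1:=\xi_i^{1,1}$) and then $\xi_i^{t}$ for $t\ge2$. Initialization: $x_i^1=\bar x^1$ for all $i$, for a common point $\bar x^1\in\mathcal X$; $z_i^1=y_i^1=\frac1{b_0}\sum_{r=1}^{b_0}\nabla f_i(x_i^1,\xi_i^{1,r})$; $z_i^0:=0$ and $\nabla f_i(x_i^0,\xi_i^1):=0$. For $t\ge1$, each node $i$ computes $\tilde f_i(x):=\hat f_i(x,x_i^t,\xi_i^t)+(1-\beta)\langle z_i^{t-1}-\nabla f_i(x_i^{t-1},\xi_i^t),x-x_i^t\rangle$, $\hat x_i^t:=\arg\min_{x\in\mathcal X}\ \tilde f_i(x)+\langle y_i^t-z_i^t,x-x_i^t\rangle+h(x)$, $x_i^{t+1}:=\sum_{j=1}^nW_{ij}\big(x_j^t+\alpha(\hat x_j^t-x_j^t)\big)$, $z_i^{t+1}:=\nabla f_i(x_i^{t+1},\xi_i^{t+1})+(1-\beta)\big(z_i^t-\nabla f_i(x_i^t,\xi_i^{t+1})\big)$, $y_i^{t+1}:=\sum_{j=1}^nW_{ij}\big(y_j^t+z_j^{t+1}-z_j^t\big)$. Notation. $x^t,y^t,z^t,\hat x^t\in\mathbb{R}^{nd}$ are the stacked vectors $[x_1^t;\dots;x_n^t]$ etc.; $\bar x^t=\frac1n\sum_ix_i^t$, and similarly $\bar y^t,\bar z^t$. $\nabla\mathbf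 u(x^t):=[\nabla u_1(x_1^t);\dots;\nabla u_n(x_n^t)]$ and $\overline{\nabla u}(x^t):=\frac1n\sum_i\nabla u_i(x_i^t)$. Define $\theta^t:=\|x^t-(\mathbf 1_n\otimes I_d)\bar x^t\|$, $\delta^t:=\hat x^t-x^t$, $\phi^t:=\mathbb{E}\|\bar z^t-\overline{\nabla u}(x^t)\|^2$, $\upsilon^t:=\mathbb{E}\|z^t-\nabla\mathbf u(x^t)\|^2$, $\varepsilon^t:=\mathbb{E}\|y^t-(\mathbf 1_n\otimes I_d)\bar y^t\|^2$. Norms are Euclidean. Assumptions. (A1) $\inf_{x}U(x)>-\infty$. (A2) With $\mathcal H^t$ the history generated by $\{\xi_i^\tau\}_{i\le n,\tau\le t-1}$, $\mathbb{E}[\nabla f_i(x^t,\xi_i^t)\mid\mathcal H^t]=\nabla u_i(x^t)$. (A3) $\mathbb{E}\|\nabla f_i(x,\xi_i^t)-\nabla u_i(x)\|^2\le\sigma_i^2$ for all $x$; $\bar\sigma^2:=\sum_i\sigma_i^2$. (A4) $\mathbb{E}\|\nabla f_i(x,\xi)-\nabla f_i(y,\xi)\|^2\le L^2\|x-y\|^2$ for all $x,y$. (A7) The graph is undirected and connected, $W$ is doubly stochastic, $W_{ii}>0$ for all $i$, and for $i\ne j$, $W_{ij}>0$ if $(i,j)\in\mathcal E$ and $W_{ij}=0$ otherwise. *)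

theory Defs
  imports "HOL-Analysis.Analysis" "HOL-Probability.Probability"
begin

definition grad :: "('a::euclidean_space \<Rightarrow> real) \<Rightarrow> 'a \<Rightarrow> 'a" where
  "grad f x = (SOME g. (f has_derivative (\<lambda>h. g \<bullet> h)) (at x))"

definition strongly_convex_on :: "real \<Rightarrow> 'a::real_normed_vector set \<Rightarrow> ('a \<Rightarrow> real) \<Rightarrow> bool" where
  "strongly_convex_on mu S f \<longleftrightarrow> convex S \<and>
     (\<forall>x\<in>S. \<forall>y\<in>S. \<forall>a::real. 0 \<le> a \<and> a \<le> 1 \<longrightarrow>
        f ((1 - a) *\<^sub>R x + a *\<^sub>R y) \<le> (1 - a) * f x + a * f y - mu / 2 * a * (1 - a) * (norm (x - y))^2)"

definition Jmat :: "real^'n::finite^'n" where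
  "Jmat = (\<chi> i j. 1 / real CARD('n))"

definition lambdaW :: "real^'n::finite^'n \<Rightarrow> real" where
  "lambdaW W = onorm (\<lambda>v. (W - Jmat) *v v)"

definition avg :: "('n::finite \<Rightarrow> 'a::real_vector) \<Rightarrow> 'a" where
  "avg x = (1 / real CARD('n)) *\<^sub>R (\<Sum>i\<in>UNIV. x i)"

definition sqnorm_stack :: "('n::finite \<Rightarrow> 'a::real_normed_vector) \<Rightarrow> real" where
  "sqnorm_stack x = (\<Sum>i\<in>UNIV. (norm (x i))^2)"

text \<open>(theta^t)^2 = ||x - 1 (x) xbar||^2.\<close>
definition consensus_sq :: "('n::finite \<Rightarrow> 'a::real_normed_vector) \<Rightarrow> real" where
  "consensus_sq x = sqnorm_stack (\<lambda>i. x i - avg x)"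

definition assumption_A7 :: "('n::finite \<times> 'n) set \<Rightarrow> real^'n^'n \<Rightarrow> bool" where
  "assumption_A7 E W \<longleftrightarrow>
     sym E \<and> (\<forall>i j. (i, j) \<in> E\<^sup>*) \<and>
     (\<forall>i j. 0 \<le> W $ i $ j) \<and>
     (\<forall>i. (\<Sum>j\<in>UNIV. W $ i $ j) = 1) \<and> (\<forall>j. (\<Sum>i\<in>UNIV. W $ i $ j) = 1) \<and>
     (\<forall>i. W $ i $ i > 0) \<and>
     (\<forall>i j. i \<noteq> j \<longrightarrow> (W $ i $ j > 0 \<longleftrightarrow> (i, j) \<in> E))"

text \<open>The iterates (x, xhat, y, z), on every sample path omega, are generated by D-MSSCA
  with data f (stochastic losses), fhat (surrogates), h, g, weight matrix W, parameters
  alpha, beta, mu, b0, initial batch samples xib i r (r = 1..b0) and samples xi i t (t \<ge> 1),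
  where xi i 1 = xib i 1. Stacked vectors are functions 'n \<Rightarrow> real^'d.
  The convention z^0 = 0 and grad f_i(x_i^0, xi_i^1) = 0 means the correction term
  in ftilde vanishes at t = 1.\<close>
definition dmssca_run ::
  "('n::finite \<Rightarrow> real^'d \<Rightarrow> 's \<Rightarrow> real) \<Rightarrow>
   ('n \<Rightarrow> real^'d \<Rightarrow> 's \<Rightarrow> real^'d \<Rightarrow> real) \<Rightarrow>
   (real^'d \<Rightarrow> real) \<Rightarrow> (real^'d \<Rightarrow> real) \<Rightarrow> real^'n^'n \<Rightarrow>
   real \<Rightarrow> real \<Rightarrow> real \<Rightarrow> nat \<Rightarrow>
   ('n \<Rightarrow> nat \<Rightarrow> 'w \<Rightarrow> 's) \<Rightarrow> ('n \<Rightarrow> nat \<Rightarrow> 'w \<Rightarrow> 's) \<Rightarrow>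
   (nat \<Rightarrow> 'w \<Rightarrow> 'n \<Rightarrow> real^'d) \<Rightarrow> (nat \<Rightarrow> 'w \<Rightarrow> 'n \<Rightarrow> real^'d) \<Rightarrow>
   (nat \<Rightarrow> 'w \<Rightarrow> 'n \<Rightarrow> real^'d) \<Rightarrow> (nat \<Rightarrow> 'w \<Rightarrow> 'n \<Rightarrow> real^'d) \<Rightarrow> bool" where
  "dmssca_run f fhat h g W alpha beta mu b0 xib xi x xhat y z \<longleftrightarrow>
    (let X = {v. g v \<le> 0} in
     0 < alpha \<and> alpha < 1 \<and> 0 < beta \<and> beta < 1 \<and> 0 < mu \<and> 1 \<le> b0 \<and>
     convex_on UNIV h \<and> convex_on UNIV g \<and>
     (\<forall>i v s. (\<lambda>u. f i u s) differentiable (at v)) \<and>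
     (\<forall>i v s. strongly_convex_on mu UNIV (fhat i v s)) \<and>
     (\<forall>i v s. (fhat i v s has_derivative (\<lambda>k. grad (\<lambda>u. f i u s) v \<bullet> k)) (at v)) \<and>
     (\<forall>i w. xib i 1 w = xi i 1 w) \<and>
     (\<forall>w. \<exists>xb. xb \<in> X \<and> (\<forall>i. x 1 w i = xb)) \<and>
     (\<forall>w i. z 1 w i = (1 / real b0) *\<^sub>R (\<Sum>r=1..b0. grad (\<lambda>u. f i u (xib i r w)) (x 1 w i))) \<and>
     (\<forall>w i. y 1 w i = z 1 w i) \<and>
     (\<forall>t\<ge>1. \<forall>w i.
        let corr = (if t = 1 then 0
                    else z (t - 1) w i - grad (\<lambda>u. f i u (xi i t w)) (x (t - 1) w i));
            obj = (\<lambda>v. fhat i (x t w i) (xi i t w) v + (1 - beta) * (corr \<bullet> (v - x t w i))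
                        + (y t w i - z t w i) \<bullet> (v - x t w i) + h v)
        in xhat t w i \<in> X \<and> (\<forall>v\<in>X. obj (xhat t w i) \<le> obj v)) \<and>
     (\<forall>t\<ge>1. \<forall>w i. x (t + 1) w i =
        (\<Sum>j\<in>UNIV. W $ i $ j *\<^sub>R (x t w j + alpha *\<^sub>R (xhat t w j - x t w j)))) \<and>
     (\<forall>t\<ge>1. \<forall>w i. z (t + 1) w i =
        grad (\<lambda>u. f i u (xi i (t + 1) w)) (x (t + 1) w i)
        + (1 - beta) *\<^sub>R (z t w i - grad (\<lambda>u. f i u (xi i (t + 1) w)) (x t w i))) \<and>
     (\<forall>t\<ge>1. \<forall>w i. y (t + 1) w i =
        (\<Sum>j\<in>UNIV. W $ i $ j *\<^sub>R (y t w j + z (t + 1) w j - z t w j))))"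

end

theory Submission
  imports Defs
begin

(* Stack the local iterates as the rows of an n x d matrix X^t. Since W is doubly stochastic,
  the consensus error e^t = (I - J) X^t obeys e^(t+1) = (W - J)(e^t + alpha delta^t), so
  |e^(t+1)| <= lambda_W (|e^t| + alpha |delta^t|), and lambda_W < 1 because the graph is
  connected and W has a positive diagonal. Squaring with Jensen's inequality gives
  |e^(t+1)|^2 <= lambda_W |e^t|^2 + alpha^2 lambda_W^2 |delta^t|^2 / (1 - lambda_W);
  summing from e^1 = 0 yields the bound pathwise, and integrating yields it in expectation. *)

lemma power2_norm_vec: "(norm (x::'a::real_normed_vector^'n))^2 = (\<Sum>i\<in>UNIV. (norm (x$i))^2)"
  unfolding norm_vec_def L2_set_def by (simp add: sum_nonneg)

lemma power2_norm_vec_real: "(norm (u::real^'n))^2 = (\<Sum>i\<in>UNIV. (u$i)^2)"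
  by (simp add: power2_norm_vec)

lemma onorm_less_one:
  fixes f :: "'a::euclidean_space \<Rightarrow> 'b::real_normed_vector"
  assumes "linear f" and strict: "\<And>v. v \<noteq> 0 \<Longrightarrow> norm (f v) < norm v"
  shows "onorm f < 1"
proof -
  have "bounded_linear f"
    using assms(1) by (simp add: linear_conv_bounded_linear)
  then have "continuous_on (sphere 0 1) (\<lambda>v. norm (f v))"
    by (intro continuous_intros linear_continuous_on)
  then obtain v0 where v0: "v0 \<in> sphere 0 1"
    and max: "\<And>v. v \<in> sphere 0 1 \<Longrightarrow> norm (f v) \<le> norm (f v0)"
    using continuous_attains_sup[OF compact_sphere] by (metis sphere_eq_empty not_one_less_zero)
  have "norm (f v) \<le> norm (f v0) * norm v" for v
  proof (cases "v = 0")
    case False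
    then have "norm (f (v /\<^sub>R norm v)) \<le> norm (f v0)" by (intro max) simp
    then show ?thesis
      using False by (simp add: linear_scale[OF assms(1)] field_simps)
  qed (simp add: linear_0[OF assms(1)])
  then have "onorm f \<le> norm (f v0)" by (rule onorm_le)
  also have "\<dots> < 1" using strict[of v0] v0 by force
  finally show ?thesis .
qed

lemma weighted_variance_eq:
  fixes p u :: "'n::finite \<Rightarrow> real"
  assumes "sum p UNIV = 1"
  shows "(\<Sum>j\<in>UNIV. p j * (u j)^2) - (\<Sum>j\<in>UNIV. p j * u j)^2
     = (1/2) * (\<Sum>j\<in>UNIV. \<Sum>k\<in>UNIV. p j * p k * (u j - u k)^2)"
proof -
  define A where "A = (\<Sum>j\<in>UNIV. p j * (u j)^2)"
  define B where "B = (\<Sum>j\<in>UNIV. p j * u j)"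
  have "(\<Sum>j\<in>UNIV. \<Sum>k\<in>UNIV. p j * p k * (u j - u k)^2)
      = (\<Sum>j\<in>UNIV. \<Sum>k\<in>UNIV. (p j * (u j)^2) * p k + p j * (p k * (u k)^2) - 2 * ((p j * u j) * (p k * u k)))"
    by (intro sum.cong refl) (simp add: power2_diff algebra_simps)
  also have "\<dots> = (\<Sum>j\<in>UNIV. (p j * (u j)^2) * sum p UNIV + p j * A - 2 * ((p j * u j) * B))"
    unfolding A_def B_def
    by (intro sum.cong refl) (simp add: sum.distrib sum_subtractf sum_distrib_left[symmetric] mult.assoc)
  also have "\<dots> = A + A - 2 * (B * B)"
    using assms unfolding A_def B_def
    by (simp add: sum.distrib sum_subtractf flip: sum_distrib_right sum_distrib_left)
  finally show ?thesis unfolding A_def B_def by (simp add: power2_eq_square)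
qed

lemma power2_norm_diff_matrix_vector_mult:
  fixes W :: "real^'n::finite^'n" and u :: "real^'n"
  assumes rows: "\<And>i. (\<Sum>j\<in>UNIV. W$i$j) = 1" and cols: "\<And>j. (\<Sum>i\<in>UNIV. W$i$j) = 1"
  shows "(norm u)^2 - (norm (W *v u))^2
     = (1/2) * (\<Sum>i\<in>UNIV. \<Sum>j\<in>UNIV. \<Sum>k\<in>UNIV. W$i$j * W$i$k * (u$j - u$k)^2)"
proof -
  have "(norm u)^2 = (\<Sum>j\<in>UNIV. \<Sum>i\<in>UNIV. W$i$j * (u$j)^2)"
    using cols by (simp add: power2_norm_vec_real flip: sum_distrib_right)
  also have "\<dots> = (\<Sum>i\<in>UNIV. \<Sum>j\<in>UNIV. W$i$j * (u$j)^2)"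
    by (rule sum.swap)
  finally have "(norm u)^2 - (norm (W *v u))^2 =
      (\<Sum>i\<in>UNIV. (\<Sum>j\<in>UNIV. W$i$j * (u$j)^2) - (\<Sum>j\<in>UNIV. W$i$j * u$j)^2)"
    by (simp add: power2_norm_vec_real matrix_vector_mult_def sum_subtractf)
  also have "\<dots> = (\<Sum>i\<in>UNIV. (1/2) * (\<Sum>j\<in>UNIV. \<Sum>k\<in>UNIV. W$i$j * W$i$k * (u$j - u$k)^2))"
    by (intro sum.cong refl weighted_variance_eq rows)
  finally show ?thesis by (simp add: sum_distrib_left)
qed

lemma assumption_A7D:
  assumes "assumption_A7 E (W::real^'n::finite^'n)"
  shows "\<And>i j. 0 \<le> W$i$j" and "\<And>i. (\<Sum>j\<in>UNIV. W$i$j) = 1"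
    and "\<And>j. (\<Sum>i\<in>UNIV. W$i$j) = 1" and "\<And>i. W$i$i > 0"
    and "\<And>i j. i \<noteq> j \<Longrightarrow> (i,j) \<in> E \<Longrightarrow> W$i$j > 0" and "\<And>i j. (i,j) \<in> E\<^sup>*"
  using assms unfolding assumption_A7_def by auto

lemma norm_matrix_vector_mult_le:
  fixes W :: "real^'n::finite^'n"
  assumes nonneg: "\<And>i j. 0 \<le> W$i$j"
    and rows: "\<And>i. (\<Sum>j\<in>UNIV. W$i$j) = 1" and cols: "\<And>j. (\<Sum>i\<in>UNIV. W$i$j) = 1"
  shows "norm (W *v u) \<le> norm u"
proof -
  have "0 \<le> (\<Sum>i\<in>UNIV. \<Sum>j\<in>UNIV. \<Sum>k\<in>UNIV. W$i$j * W$i$k * (u$j - u$k)^2)"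
    using nonneg by (intro sum_nonneg) simp
  then have "(norm (W *v u))^2 \<le> (norm u)^2"
    using power2_norm_diff_matrix_vector_mult[of W u, OF rows cols] by linarith
  then show ?thesis by (rule power2_le_imp_le) simp
qed

text \<open>Norm preservation kills every term \<open>W\<^sub>i\<^sub>i W\<^sub>i\<^sub>k (u\<^sub>i - u\<^sub>k)\<^sup>2\<close>
  in \<open>power2_norm_diff_matrix_vector_mult\<close>, so \<open>u\<close> agrees along every edge;
  connectivity then makes \<open>u\<close> constant.\<close>

lemma norm_matrix_vector_mult_eq_imp_constant:
  assumes A7: "assumption_A7 E (W::real^'n::finite^'n)"
    and eq: "norm (W *v u) = norm u"
  shows "u$i = u$k"
proof -
  note W = assumption_A7D[OF A7]
  have "(\<Sum>i\<in>UNIV. \<Sum>j\<in>UNIV. \<Sum>k\<in>UNIV. W$i$j * W$i$k * (u$j - u$k)^2) = 0"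
    using power2_norm_diff_matrix_vector_mult[of W u, OF W(2,3)] eq by simp
  then have zero: "W$i$j * W$i$k * (u$j - u$k)^2 = 0" for i j k
    using W(1) by (simp add: sum_nonneg_eq_0_iff sum_nonneg) blast
  have edge: "u$i = u$k" if "(i,k) \<in> E" for i k
  proof (cases "i = k")
    case False
    then have "W$i$i * W$i$k > 0" using W(4,5) that by simp
    then show ?thesis using zero[of i i k] by auto
  qed simp
  have "u$i = u$k" if "(i,k) \<in> E\<^sup>*" for i k
    using that by (induction rule: rtrancl_induct) (auto dest: edge)
  then show ?thesis using W(6) by blast
qed

lemma norm_minus_Jmat_mult_less:
  assumes A7: "assumption_A7 E (W::real^'n::finite^'n)" and "v \<noteq> 0"
  shows "norm ((W - Jmat) *v v) < norm v"
proof -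
  note W = assumption_A7D[OF A7]
  define m where "m = avg (\<lambda>i. v$i)"
  define c :: "real^'n" where "c = (\<chi> i. m)"
  define u where "u = v - c"
  have n: "real CARD('n) > 0" by simp
  have sum_u: "(\<Sum>i\<in>UNIV. u$i) = 0"
    using n by (simp add: u_def c_def m_def avg_def sum_subtractf)
  have Wu: "(W - Jmat) *v v = W *v u"
  proof -
    have "((W - Jmat) *v v)$i = (\<Sum>j\<in>UNIV. W$i$j * v$j) - m" for i
      by (simp add: matrix_vector_mult_def Jmat_def m_def avg_def left_diff_distrib
          sum_subtractf sum_divide_distrib)
    moreover have "(W *v u)$i = (\<Sum>j\<in>UNIV. W$i$j * v$j) - m" for i
      using W(2)[of i]
      by (simp add: matrix_vector_mult_def u_def c_def right_diff_distrib sum_subtractf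
          flip: sum_distrib_right)
    ultimately show ?thesis by (simp add: vec_eq_iff)
  qed
  have "orthogonal u c"
    using sum_u by (simp add: orthogonal_def inner_vec_def c_def flip: sum_distrib_right)
  then have "(norm v)^2 = (norm u)^2 + (norm c)^2"
    using norm_add_Pythagorean[of u c] by (simp add: u_def)
  then have "(norm u)^2 \<le> (norm v)^2" by simp
  then have u_le_v: "norm u \<le> norm v"
    by (rule power2_le_imp_le) simp
  show ?thesis
  proof (cases "norm (W *v u) = norm u")
    case True
    then have const: "u$k = u$i" for i k
      by (rule norm_matrix_vector_mult_eq_imp_constant[OF A7])
    have "(\<Sum>k\<in>UNIV. u$k) = (\<Sum>k\<in>(UNIV::'n set). u$i)" for i
      by (rule sum.cong[OF refl const])
    then have "real CARD('n) * u$i = 0" for i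
      using sum_u by simp
    then have "u = 0" using n by (simp add: vec_eq_iff)
    then show ?thesis using Wu \<open>v \<noteq> 0\<close> by simp
  next
    case False
    then show ?thesis using Wu u_le_v norm_matrix_vector_mult_le[OF W(1-3), of u] by simp
  qed
qed

lemma lambdaW_nonneg: "0 \<le> lambdaW W"
  unfolding lambdaW_def by (rule onorm_pos_le[OF matrix_vector_mul_bounded_linear])

lemma lambdaW_less_one:
  assumes "assumption_A7 E W"
  shows "lambdaW W < 1"
  unfolding lambdaW_def
  using norm_minus_Jmat_mult_less[OF assms] by (intro onorm_less_one) auto

lemma power2_norm_matrix_columns:
  "(norm (X::real^'m::finite^'n::finite))^2 = (\<Sum>k\<in>UNIV. (norm (column k X))^2)"
proof -
  have "(norm X)^2 = (\<Sum>i\<in>UNIV. \<Sum>k\<in>UNIV. (X$i$k)^2)"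
    by (simp add: power2_norm_vec)
  also have "\<dots> = (\<Sum>k\<in>UNIV. \<Sum>i\<in>UNIV. (X$i$k)^2)"
    by (rule sum.swap)
  finally show ?thesis by (simp add: power2_norm_vec_real column_def)
qed

lemma norm_matrix_matrix_mult_le:
  fixes M :: "real^'n::finite^'m::finite" and B :: "real^'d::finite^'n"
  shows "norm (M ** B) \<le> onorm ((*v) M) * norm B"
proof -
  define l where "l = onorm ((*v) M)"
  have "l \<ge> 0" unfolding l_def by (rule onorm_pos_le[OF matrix_vector_mul_bounded_linear])
  have "column k (M ** B) = M *v column k B" for k
    by (simp add: vec_eq_iff column_def matrix_matrix_mult_def matrix_vector_mult_def)
  then have "(norm (M ** B))^2 = (\<Sum>k\<in>UNIV. (norm (M *v column k B))^2)"
    by (simp only: power2_norm_matrix_columns[of "M ** B"])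
  also have "\<dots> \<le> (\<Sum>k\<in>UNIV. (l * norm (column k B))^2)"
    unfolding l_def
    by (intro sum_mono power_mono onorm[OF matrix_vector_mul_bounded_linear]) simp
  also have "\<dots> = (l * norm B)^2"
    by (simp only: power_mult_distrib power2_norm_matrix_columns[of B] sum_distrib_left)
  finally have "(norm (M ** B))^2 \<le> (l * norm B)^2" .
  then show ?thesis
    unfolding l_def[symmetric] by (rule power2_le_imp_le) (simp add: \<open>l \<ge> 0\<close>)
qed

lemma matrix_matrix_mult_nth:
  "((A::real^'n::finite^'m) ** (B::real^'d^'n)) $ i = (\<Sum>j\<in>UNIV. A$i$j *\<^sub>R B$j)"
  by (simp add: vec_eq_iff matrix_matrix_mult_def sum_component)

lemma consensus_error_step:
  fixes W :: "real^'n::finite^'n" and x xh x' :: "'n \<Rightarrow> real^'d::finite"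
  assumes rows: "\<And>i. (\<Sum>j\<in>UNIV. W$i$j) = 1" and cols: "\<And>j. (\<Sum>i\<in>UNIV. W$i$j) = 1"
    and upd: "\<And>i. x' i = (\<Sum>j\<in>UNIV. W$i$j *\<^sub>R (x j + al *\<^sub>R (xh j - x j)))"
  shows "(\<chi> i. x' i - avg x') = (W - Jmat) ** ((\<chi> i. x i - avg x) + al *\<^sub>R (\<chi> i. xh i - x i))"
proof -
  define y where "y j = x j + al *\<^sub>R (xh j - x j)" for j
  have "(\<Sum>i\<in>UNIV. x' i) = (\<Sum>j\<in>UNIV. (\<Sum>i\<in>UNIV. W$i$j) *\<^sub>R y j)"
    unfolding upd y_def scaleR_sum_left by (rule sum.swap)
  then have avg_x': "avg x' = avg y"
    using cols by (simp add: avg_def)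
  have "((W - Jmat) ** (\<chi> i. y i - avg x)) $ i = x' i - avg x'" for i
  proof -
    have "((W - Jmat) ** (\<chi> i. y i - avg x)) $ i
        = (\<Sum>j\<in>UNIV. (W$i$j - 1 / real CARD('n)) *\<^sub>R y j)
          - (\<Sum>j\<in>UNIV. W$i$j - 1 / real CARD('n)) *\<^sub>R avg x"
      by (simp add: matrix_matrix_mult_nth Jmat_def scaleR_diff_right sum_subtractf
          flip: scaleR_sum_left)
    also have "(\<Sum>j\<in>UNIV. W$i$j - 1 / real CARD('n)) = 0"
      using rows by (simp add: sum_subtractf)
    also have "(\<Sum>j\<in>UNIV. (W$i$j - 1 / real CARD('n)) *\<^sub>R y j)
        = (\<Sum>j\<in>UNIV. W$i$j *\<^sub>R y j) - (1 / real CARD('n)) *\<^sub>R (\<Sum>j\<in>UNIV. y j)"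
      by (simp add: scaleR_diff_left sum_subtractf scaleR_sum_right)
    also have "\<dots> = x' i - avg y"
      by (simp only: upd y_def avg_def)
    finally show ?thesis using avg_x' by simp
  qed
  moreover have "(\<chi> i. x i - avg x) + al *\<^sub>R (\<chi> i. xh i - x i) = (\<chi> i. y i - avg x)"
    by (simp add: vec_eq_iff y_def algebra_simps)
  ultimately show ?thesis
    unfolding vec_eq_iff[of "\<chi> i. x' i - avg x'"] by simp
qed

text \<open>Jensen's inequality for the square, at the points \<open>a\<close> and \<open>b / (1 - l)\<close>.\<close>

lemma power2_add_le_convex:
  fixes l a b :: real
  assumes "0 \<le> l" "l < 1"
  shows "(l * a + b)^2 \<le> l * a^2 + b^2 / (1 - l)"
proof -
  have "l * a^2 + b^2 / (1 - l) - (l * a + b)^2 = l * ((1 - l) * a - b)^2 / (1 - l)"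
    using assms by (simp add: field_simps power2_eq_square)
  also have "\<dots> \<ge> 0" using assms by simp
  finally show ?thesis by simp
qed

lemma sum_power2_le_of_contraction:
  fixes a d :: "nat \<Rightarrow> real"
  assumes a1: "a 1 = 0" and rec: "\<And>t. 1 \<le> t \<Longrightarrow> a (Suc t) \<le> l * (a t + c * d t)"
    and a_nonneg: "\<And>t. 0 \<le> a t" and "0 \<le> l" "l < 1"
  shows "(\<Sum>t=1..T. (a t)^2) \<le> (c * l)^2 / (1 - l)^2 * (\<Sum>t=1..T-1. (d t)^2)"
proof (cases "T = 0")
  case False
  define K where "K = (c * l)^2 / (1 - l)"
  define S where "S = (\<Sum>t=1..T. (a t)^2)"
  define D where "D = (\<Sum>t=1..T-1. (d t)^2)"
  have step: "(a (Suc t))^2 \<le> l * (a t)^2 + K * (d t)^2" if "1 \<le> t" for t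
  proof -
    have "(a (Suc t))^2 \<le> (l * a t + (c * l) * d t)^2"
      using rec[OF that] a_nonneg[of "Suc t"] by (intro power_mono) (auto simp: algebra_simps)
    also have "\<dots> \<le> l * (a t)^2 + K * (d t)^2"
      using power2_add_le_convex[OF assms(4,5), of "a t" "c * l * d t"]
      by (simp add: K_def power_mult_distrib)
    finally show ?thesis .
  qed
  obtain T' where T: "T = Suc T'" using False by (cases T) auto
  have "S = (a 1)^2 + (\<Sum>t=Suc 1..Suc T'. (a t)^2)"
    unfolding S_def T by (rule sum.atLeast_Suc_atMost) simp
  also have "(\<Sum>t=Suc 1..Suc T'. (a t)^2) = (\<Sum>t=1..T'. (a (Suc t))^2)"
    by (rule sum.shift_bounds_cl_Suc_ivl)
  finally have "S = (\<Sum>t=1..T-1. (a (Suc t))^2)"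
    using a1 T by simp
  also have "\<dots> \<le> (\<Sum>t=1..T-1. l * (a t)^2 + K * (d t)^2)"
    by (intro sum_mono step) simp
  also have "\<dots> = l * (\<Sum>t=1..T-1. (a t)^2) + K * D"
    by (simp add: sum.distrib sum_distrib_left D_def)
  also have "\<dots> \<le> l * S + K * D"
    unfolding S_def using \<open>0 \<le> l\<close> by (intro add_right_mono mult_left_mono sum_mono2) auto
  finally have "(1 - l) * S \<le> K * D" by (simp add: algebra_simps)
  then have "S \<le> K * D / (1 - l)"
    using \<open>l < 1\<close> by (simp add: pos_le_divide_eq mult.commute)
  also have "\<dots> = (c * l)^2 / (1 - l)^2 * D"
    by (simp add: K_def power2_eq_square)
  finally show ?thesis unfolding S_def D_def .
qed simp

lemma inverse_power2_one_minus_le: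
  fixes l :: real
  assumes "0 \<le> l" "l < 1"
  shows "1 / (1 - l)^2 \<le> 4 / (1 - l^2)^2"
proof -
  have "(1 + l)^2 \<le> 2^2" using assms by (intro power_mono) auto
  moreover have "(1 - l^2)^2 = (1 - l)^2 * (1 + l)^2" by (simp add: power2_eq_square algebra_simps)
  ultimately have "(1 - l^2)^2 \<le> (1 - l)^2 * 4" by (simp add: mult_left_mono)
  moreover have "l^2 < 1" using assms by (simp add: power_less_one_iff)
  then have "0 < (1 - l^2)^2" by simp
  ultimately have "4 / (4 * (1 - l)^2) \<le> 4 / (1 - l^2)^2"
    using assms by (intro divide_left_mono) (simp_all add: mult.commute)
  then show ?thesis by simp
qed

lemma consensus_sq_sum_le:
  fixes W :: "real^'n::finite^'n" and x xh :: "nat \<Rightarrow> 'n \<Rightarrow> real^'d::finite"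
  assumes A7: "assumption_A7 E W" and "0 \<le> alpha"
    and init: "\<And>i j. x 1 i = x 1 j"
    and upd: "\<And>t i. 1 \<le> t \<Longrightarrow>
      x (Suc t) i = (\<Sum>j\<in>UNIV. W$i$j *\<^sub>R (x t j + alpha *\<^sub>R (xh t j - x t j)))"
  shows "(\<Sum>t=1..T. consensus_sq (x t))
    \<le> 4 * alpha^2 * (lambdaW W)^2 / (1 - (lambdaW W)^2)^2
      * (\<Sum>t=1..T-1. sqnorm_stack (\<lambda>i. xh t i - x t i))"
proof -
  note W = assumption_A7D[OF A7]
  define l where "l = lambdaW W"
  have "0 \<le> l" "l < 1"
    unfolding l_def by (rule lambdaW_nonneg, rule lambdaW_less_one[OF A7])
  define e where "e t = (\<chi> i. x t i - avg (x t))" for t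
  define D where "D t = (\<chi> i. xh t i - x t i)" for t
  have rec: "norm (e (Suc t)) \<le> l * (norm (e t) + alpha * norm (D t))" if "1 \<le> t" for t
  proof -
    have "e (Suc t) = (W - Jmat) ** (e t + alpha *\<^sub>R D t)"
      unfolding e_def D_def using W(2,3) upd[OF that] by (rule consensus_error_step)
    then have "norm (e (Suc t)) \<le> l * norm (e t + alpha *\<^sub>R D t)"
      using norm_matrix_matrix_mult_le[of "W - Jmat"] by (simp add: l_def lambdaW_def)
    also have "\<dots> \<le> l * (norm (e t) + alpha * norm (D t))"
      using \<open>0 \<le> l\<close> \<open>0 \<le> alpha\<close> norm_triangle_ineq[of "e t" "alpha *\<^sub>R D t"]
      by (intro mult_left_mono) auto
    finally show ?thesis .
  qed
  have "avg (x 1) = x 1 i" for i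
  proof -
    have "(\<Sum>j\<in>UNIV. x 1 j) = (\<Sum>j\<in>(UNIV::'n set). x 1 i)"
      by (intro sum.cong refl init)
    then show ?thesis by (simp add: avg_def sum_constant_scaleR del: sum_constant)
  qed
  then have "e 1 = 0" by (simp add: e_def vec_eq_iff)
  then have "(\<Sum>t=1..T. (norm (e t))^2) \<le> (alpha * l)^2 / (1 - l)^2 * (\<Sum>t=1..T-1. (norm (D t))^2)"
    using rec \<open>0 \<le> l\<close> \<open>l < 1\<close> by (intro sum_power2_le_of_contraction) auto
  also have "\<dots> \<le> 4 * alpha^2 * l^2 / (1 - l^2)^2 * (\<Sum>t=1..T-1. (norm (D t))^2)"
    using mult_left_mono[OF inverse_power2_one_minus_le[OF \<open>0 \<le> l\<close> \<open>l < 1\<close>], of "(alpha * l)^2"]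
    by (intro mult_right_mono sum_nonneg) (simp_all add: power_mult_distrib mult_ac)
  finally show ?thesis
    by (simp add: l_def e_def D_def consensus_sq_def sqnorm_stack_def power2_norm_vec)
qed

lemma nn_integral_sum_le_cmult_sum:
  fixes f g :: "'i \<Rightarrow> 'w \<Rightarrow> real"
  assumes "\<And>i. f i \<in> borel_measurable M" and "\<And>j. g j \<in> borel_measurable M"
    and "\<And>i w. 0 \<le> f i w" and "\<And>j w. 0 \<le> g j w" and "0 \<le> C"
    and le: "\<And>w. (\<Sum>i\<in>I. f i w) \<le> C * (\<Sum>j\<in>J. g j w)"
  shows "(\<Sum>i\<in>I. \<integral>\<^sup>+ w. ennreal (f i w) \<partial>M) \<le> ennreal C * (\<Sum>j\<in>J. \<integral>\<^sup>+ w. ennreal (g j w) \<partial>M)"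
proof -
  have "(\<Sum>i\<in>I. \<integral>\<^sup>+ w. ennreal (f i w) \<partial>M) = (\<integral>\<^sup>+ w. ennreal (\<Sum>i\<in>I. f i w) \<partial>M)"
    using assms(1,3) by (simp add: nn_integral_sum[symmetric])
  also have "\<dots> \<le> (\<integral>\<^sup>+ w. ennreal C * ennreal (\<Sum>j\<in>J. g j w) \<partial>M)"
    using le \<open>0 \<le> C\<close> by (intro nn_integral_mono) (simp add: ennreal_leI flip: ennreal_mult')
  also have "\<dots> = ennreal C * (\<Sum>j\<in>J. \<integral>\<^sup>+ w. ennreal (g j w) \<partial>M)"
    using assms(2,4) by (simp add: nn_integral_cmult nn_integral_sum[symmetric])
  finally show ?thesis .
qed

theorem lemma6:
  fixes M :: "'w measure"
    and f :: "'n::finite \<Rightarrow> real^'d \<Rightarrow> 's \<Rightarrow> real"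
    and fhat :: "'n \<Rightarrow> real^'d \<Rightarrow> 's \<Rightarrow> real^'d \<Rightarrow> real"
    and h g :: "real^'d \<Rightarrow> real"
    and W :: "real^'n^'n" and E :: "('n \<times> 'n) set"
    and alpha beta mu :: real and b0 :: nat
    and xib xi :: "'n \<Rightarrow> nat \<Rightarrow> 'w \<Rightarrow> 's"
    and x xhat y z :: "nat \<Rightarrow> 'w \<Rightarrow> 'n \<Rightarrow> real^'d"
    and T :: nat
  assumes "prob_space M"
    and "assumption_A7 E W"
    and "dmssca_run f fhat h g W alpha beta mu b0 xib xi x xhat y z"
    and "\<And>t i. (\<lambda>w. x t w i) \<in> borel_measurable M"
    and "\<And>t i. (\<lambda>w. xhat t w i) \<in> borel_measurable M"
    and "T > 1"
  shows "(\<Sum>t=1..T. \<integral>\<^sup>+ w. ennreal (consensus_sq (x t w)) \<partial>M)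
         \<le> ennreal (4 * alpha^2 * (lambdaW W)^2 / (1 - (lambdaW W)^2)^2)
           * (\<Sum>t=1..T-1. \<integral>\<^sup>+ w. ennreal (sqnorm_stack (\<lambda>i. xhat t w i - x t w i)) \<partial>M)"
proof -
  have "0 < alpha" and init: "\<forall>w. \<exists>xb. xb \<in> {v. g v \<le> 0} \<and> (\<forall>i. x 1 w i = xb)"
    and upd: "\<forall>t\<ge>1. \<forall>w i. x (t + 1) w i =
      (\<Sum>j\<in>UNIV. W $ i $ j *\<^sub>R (x t w j + alpha *\<^sub>R (xhat t w j - x t w j)))"
    using assms(3) unfolding dmssca_run_def Let_def by blast+
  have "(\<Sum>t=1..T. consensus_sq (x t w))
      \<le> 4 * alpha^2 * (lambdaW W)^2 / (1 - (lambdaW W)^2)^2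
        * (\<Sum>t=1..T-1. sqnorm_stack (\<lambda>i. xhat t w i - x t w i))" for w
  proof (rule consensus_sq_sum_le[OF assms(2)])
    show "0 \<le> alpha" using \<open>0 < alpha\<close> by simp
    show "x 1 w i = x 1 w j" for i j using init by metis
    show "x (Suc t) w i = (\<Sum>j\<in>UNIV. W$i$j *\<^sub>R (x t w j + alpha *\<^sub>R (xhat t w j - x t w j)))"
      if "1 \<le> t" for t i
      using upd that by simp
  qed
  moreover have "(\<lambda>w. consensus_sq (x t w)) \<in> borel_measurable M" for t
    unfolding consensus_sq_def sqnorm_stack_def avg_def using assms(4) by measurable
  moreover have "(\<lambda>w. sqnorm_stack (\<lambda>i. xhat t w i - x t w i)) \<in> borel_measurable M" for t
    unfolding sqnorm_stack_def using assms(4,5) by measurable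
  ultimately show ?thesis
    by (intro nn_integral_sum_le_cmult_sum) (simp_all add: consensus_sq_def sqnorm_stack_def sum_nonneg)
qed

end
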